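(* Let $F$ be a field of characteristic $0$ and $G$ a group. The following are equivalent: (1) the group ring $F[G]$ is right $\aleph_0$-self-injective; (2) $G$ is finite; (3) $F[G]$ is right self-injective.
   Context: A ring $S$ is right $\aleph_0$-self-injective if every $S$-homomorphism from a countably generated right ideal of $S$ into $S_S$ extends to an $S$-homomorphism $S\to S$. *)

theory Defs
  imports "HOL-Library.Poly_Mapping" "HOL-Library.Countable_Set"
begin

text \<open>Group ring F[G]: finitely supported functions G \<Rightarrow> F with convolution
  product, i.e. the library type of finitely supported maps (poly_mapping) where 'g is a (not necessarily
  commutative) group written additively (class group_add).\<close>

definition right_ideal :: "'r::ring_1 set \<Rightarrow> bool" where
  "right_ideal I \<longleftrightarrow> 0 \<in> I \<and> (\<forall>x\<in>I. \<forall>y\<in>I. x + y \<in> I) \<and> (\<forall>x\<in>I. \<forall>s. x * s \<in> I)"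

definition right_hom :: "'r::ring_1 set \<Rightarrow> ('r \<Rightarrow> 'r) \<Rightarrow> bool" where
  "right_hom I \<phi> \<longleftrightarrow> (\<forall>x\<in>I. \<forall>y\<in>I. \<phi> (x + y) = \<phi> x + \<phi> y) \<and> (\<forall>x\<in>I. \<forall>s. \<phi> (x * s) = \<phi> x * s)"

definition countably_generated_right_ideal :: "'r::ring_1 set \<Rightarrow> bool" where
  "countably_generated_right_ideal I \<longleftrightarrow>
     right_ideal I \<and> (\<exists>X. countable X \<and> I = \<Inter>{J. right_ideal J \<and> X \<subseteq> J})"

definition right_self_injective :: "'r::ring_1 itself \<Rightarrow> bool" where
  "right_self_injective _ \<longleftrightarrow>
     (\<forall>(I::'r set) \<phi>. right_ideal I \<and> right_hom I \<phi> \<longrightarrow>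
        (\<exists>\<psi>. right_hom UNIV \<psi> \<and> (\<forall>x\<in>I. \<psi> x = \<phi> x)))"

definition right_aleph0_self_injective :: "'r::ring_1 itself \<Rightarrow> bool" where
  "right_aleph0_self_injective _ \<longleftrightarrow>
     (\<forall>(I::'r set) \<phi>. countably_generated_right_ideal I \<and> right_hom I \<phi> \<longrightarrow>
        (\<exists>\<psi>. right_hom UNIV \<psi> \<and> (\<forall>x\<in>I. \<psi> x = \<phi> x)))"

end

theory Submission
  imports Defs "HOL.Vector_Spaces"
begin

text \<open>If \<open>G\<close> is finite, Maschke's averaging turns an \<open>F\<close>-linear projection of \<open>F[G]\<close> onto a right
  ideal \<open>I\<close> into an \<open>F[G]\<close>-linear one, so \<open>I\<close> has a left identity \<open>e \<in> I\<close> and every homomorphism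
  on \<open>I\<close> is left multiplication by \<open>\<phi> e\<close>.

  Conversely, let \<open>F[G]\<close> be right \<open>\<aleph>\<^sub>0\<close>-self-injective. For finite \<open>S \<subseteq> G\<close> the invariants
  \<open>{y. \<forall>s\<in>S. s y = y}\<close> are either 0 or generated by the averaging idempotent of their (finite)
  stabilizer. Since homomorphisms on principal right ideals extend, induction on \<open>S\<close> shows that
  whatever annihilates these invariants has augmentation 0; so they are never 0, and every finite
  subset of \<open>G\<close> lies in a finite subgroup. If \<open>G\<close> were infinite, it would contain a strictly
  increasing chain of finite subgroups \<open>K n\<close>, and the differences of their averaging idempotents
  are orthogonal idempotents \<open>f n\<close>. Self-injectivity provides \<open>c\<close> with \<open>c f n = f n\<close> for even and
  \<open>c f n = 0\<close> for odd \<open>n\<close>, but the coefficient of 0 in \<open>c f n\<close> is eventually a fixed multiple of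
  that in \<open>f n\<close>.\<close>

section \<open>Group rings\<close>

abbreviation of_group :: "'g::group_add \<Rightarrow> 'g \<Rightarrow>\<^sub>0 'a::comm_ring_1" where
  "of_group g \<equiv> Poly_Mapping.single g 1"

abbreviation scalar :: "'a::comm_ring_1 \<Rightarrow> 'g::group_add \<Rightarrow>\<^sub>0 'a" where
  "scalar a \<equiv> Poly_Mapping.single 0 a"

lemma lookup_single_mult:
  fixes x :: "'g::group_add \<Rightarrow>\<^sub>0 'a::comm_ring_1"
  shows "Poly_Mapping.lookup (Poly_Mapping.single h a * x) k = a * Poly_Mapping.lookup x (-h + k)"
proof -
  have "Poly_Mapping.lookup (Poly_Mapping.single h a * x) k
      = a * (\<Sum>q. Poly_Mapping.lookup x q when k = h + q)"
    unfolding lookup_mult lookup_single by (simp add: when_mult)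
  also have "(\<Sum>q. Poly_Mapping.lookup x q when k = h + q) = (\<Sum>q. Poly_Mapping.lookup x q when q = -h + k)"
    by (rule Sum_any.cong) (auto simp: when_def add.assoc[symmetric])
  finally show ?thesis by simp
qed

lemma lookup_mult_single:
  fixes x :: "'g::group_add \<Rightarrow>\<^sub>0 'a::comm_ring_1"
  shows "Poly_Mapping.lookup (x * Poly_Mapping.single h a) k = Poly_Mapping.lookup x (k - h) * a"
proof -
  have inner: "(\<Sum>q. (a when h = q) when k = l + q) = (a when k = l + h)" for l
  proof -
    have "(\<Sum>q. (a when h = q) when k = l + q) = (\<Sum>q. (a when k = l + h) when h = q)"
      by (rule Sum_any.cong) (auto simp: when_def)
    then show ?thesis by simp
  qed
  have "Poly_Mapping.lookup (x * Poly_Mapping.single h a) k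
      = (\<Sum>l. Poly_Mapping.lookup x l * a when l = k - h)"
    unfolding lookup_mult lookup_single inner
    by (rule Sum_any.cong) (auto simp: when_def eq_diff_eq)
  then show ?thesis by simp
qed

lemma scalar_commute:
  fixes x :: "'g::group_add \<Rightarrow>\<^sub>0 'a::comm_ring_1"
  shows "scalar a * x = x * scalar a"
  by (rule poly_mapping_eqI) (simp add: lookup_single_mult lookup_mult_single mult.commute)

lemma sum_single_lookup:
  fixes x :: "'g::group_add \<Rightarrow>\<^sub>0 'a::comm_ring_1"
  shows "(\<Sum>g\<in>Poly_Mapping.keys x. Poly_Mapping.single g (Poly_Mapping.lookup x g)) = x"
proof (rule poly_mapping_eqI)
  fix k
  show "Poly_Mapping.lookup (\<Sum>g\<in>Poly_Mapping.keys x. Poly_Mapping.single g (Poly_Mapping.lookup x g)) k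
      = Poly_Mapping.lookup x k"
    by (cases "k \<in> Poly_Mapping.keys x") (auto simp: lookup_sum lookup_single when_def in_keys_iff)
qed

lemma of_group_mult_of_group: "of_group g * of_group h = (of_group (g + h) :: 'g::group_add \<Rightarrow>\<^sub>0 'a::comm_ring_1)"
  by (simp add: mult_single)

lemma right_linear_from_generators:
  fixes f :: "('g::group_add \<Rightarrow>\<^sub>0 'a::comm_ring_1) \<Rightarrow> ('g \<Rightarrow>\<^sub>0 'a)"
  assumes add: "additive f"
    and scalar: "\<And>x a. f (x * scalar a) = f x * scalar a"
    and group: "\<And>x g. f (x * of_group g) = f x * of_group g"
  shows "f (x * r) = f x * r"
proof -
  have expand: "y * r = (\<Sum>g\<in>Poly_Mapping.keys r. y * scalar (Poly_Mapping.lookup r g) * of_group g)"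
    for y
    by (subst (1) sum_single_lookup[of r, symmetric])
      (simp add: sum_distrib_left mult.assoc mult_single)
  show ?thesis
    by (simp add: expand[of x] expand[of "f x"] additive.sum[OF add] scalar group)
qed

section \<open>Right ideals and self-injectivity\<close>

lemma right_ideal_sum:
  assumes "right_ideal I" "\<And>i. i \<in> A \<Longrightarrow> f i \<in> I"
  shows "sum f A \<in> I"
  using assms(2) by (induction A rule: infinite_finite_induct) (use assms(1) in \<open>simp_all add: right_ideal_def\<close>)

lemma right_ideal_hull: "right_ideal (\<Inter>{J. right_ideal J \<and> X \<subseteq> J})"
  unfolding right_ideal_def by blast

lemma right_ideal_principal: "right_ideal (range ((*) (x :: 'r::ring_1)))"
  unfolding right_ideal_def
  by (auto simp: distrib_left[symmetric] mult.assoc) (metis mult_zero_right rangeI)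

lemma right_hom_UNIV_eq: "right_hom UNIV \<psi> \<Longrightarrow> \<psi> x = \<psi> 1 * x"
  unfolding right_hom_def by (metis UNIV_I mult_1_left)

lemma right_hom_extends_from_left_identity:
  fixes I :: "'r::ring_1 set"
  assumes "e \<in> I" "\<And>y. y \<in> I \<Longrightarrow> e * y = y" "right_hom I \<phi>"
  shows "\<exists>\<psi>. right_hom UNIV \<psi> \<and> (\<forall>x\<in>I. \<psi> x = \<phi> x)"
proof (intro exI conjI ballI)
  show "right_hom UNIV ((*) (\<phi> e))"
    by (simp add: right_hom_def distrib_left mult.assoc)
  show "\<phi> e * x = \<phi> x" if "x \<in> I" for x
  proof -
    have "\<phi> (e * x) = \<phi> e * x" using assms(1,3) unfolding right_hom_def by blast
    then show ?thesis using assms(2) that by simp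
  qed
qed

lemma right_self_injective_imp_aleph0:
  "right_self_injective TYPE('r::ring_1) \<Longrightarrow> right_aleph0_self_injective TYPE('r)"
  unfolding right_self_injective_def right_aleph0_self_injective_def
    countably_generated_right_ideal_def
  by blast

lemma aleph0_self_injective_left_mult_on_generators:
  fixes W X :: "'r::ring_1 set"
  assumes H: "right_aleph0_self_injective TYPE('r)"
    and W: "right_ideal W" "right_hom W \<phi>" and X: "countable X" "X \<subseteq> W"
  shows "\<exists>c. \<forall>x\<in>X. \<phi> x = c * x"
proof -
  define I where "I = \<Inter>{J. right_ideal J \<and> X \<subseteq> J}"
  have "countably_generated_right_ideal I"
    unfolding countably_generated_right_ideal_def I_def using X(1) right_ideal_hull by blast
  moreover have "right_hom I \<phi>"
    using W X(2) unfolding I_def right_hom_def by blast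
  ultimately obtain \<psi> where \<psi>: "right_hom UNIV \<psi>" "\<And>x. x \<in> I \<Longrightarrow> \<psi> x = \<phi> x"
    using H unfolding right_aleph0_self_injective_def by blast
  have "\<phi> x = \<psi> 1 * x" if "x \<in> X" for x
  proof -
    have "x \<in> I" using that unfolding I_def by blast
    then show ?thesis using \<psi>(2) right_hom_UNIV_eq[OF \<psi>(1)] by metis
  qed
  then show ?thesis by blast
qed

text \<open>If every element of \<open>eR\<close> killed by \<open>a\<close> is killed by \<open>b\<close>, then \<open>a e r \<mapsto> b e r\<close> is a
  well-defined homomorphism on the principal ideal \<open>a e R\<close>; its extension is left multiplication.\<close>

lemma aleph0_self_injective_ann_imp_left_factor:
  fixes a b e :: "'r::ring_1"
  assumes H: "right_aleph0_self_injective TYPE('r)"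
    and ann: "\<And>y. y \<in> range ((*) e) \<Longrightarrow> a * y = 0 \<Longrightarrow> b * y = 0"
  shows "\<exists>c. \<forall>y\<in>range ((*) e). c * a * y = b * y"
proof -
  define \<phi> where "\<phi> z = b * e * (SOME r. z = a * e * r)" for z
  have \<phi>_eq: "\<phi> (a * e * r) = b * e * r" for r
  proof -
    define r' where "r' = (SOME r'. a * e * r = a * e * r')"
    have "a * e * r = a * e * r'" unfolding r'_def by (rule someI) (rule refl)
    then have "a * (e * (r' - r)) = 0" by (simp add: right_diff_distrib mult.assoc[symmetric])
    then have "b * (e * (r' - r)) = 0" using ann[of "e * (r' - r)"] by auto
    then have "b * e * r' = b * e * r" by (simp add: right_diff_distrib mult.assoc)
    then show ?thesis by (simp add: \<phi>_def r'_def)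
  qed
  have hom: "right_hom (range ((*) (a * e))) \<phi>"
    unfolding right_hom_def
  proof (intro conjI ballI allI)
    fix x y assume "x \<in> range ((*) (a * e))" "y \<in> range ((*) (a * e))"
    then obtain r r' where "x = a * e * r" "y = a * e * r'" by auto
    then show "\<phi> (x + y) = \<phi> x + \<phi> y"
      using \<phi>_eq[of "r + r'"] by (simp add: \<phi>_eq distrib_left[symmetric])
  next
    fix x s assume "x \<in> range ((*) (a * e))"
    then obtain r where "x = a * e * r" by auto
    then show "\<phi> (x * s) = \<phi> x * s"
      using \<phi>_eq[of "r * s"] \<phi>_eq[of r] by (simp add: mult.assoc)
  qed
  have gen: "countable {a * e}" "{a * e} \<subseteq> range ((*) (a * e))"
    by (auto intro: range_eqI[of _ _ 1])
  obtain c where c: "\<phi> (a * e) = c * (a * e)"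
    using aleph0_self_injective_left_mult_on_generators[OF H right_ideal_principal hom gen] by blast
  have "c * a * e = b * e"
    using \<phi>_eq[of 1] c by (simp add: mult.assoc)
  then have "c * a * (e * r) = b * (e * r)" for r
    by (metis mult.assoc)
  then show ?thesis by auto
qed

lemma sum_orthogonal_idempotents_mult:
  fixes f :: "nat \<Rightarrow> 'r::ring_1"
  assumes orth: "\<And>m n. f m * f n = (if m = n then f n else 0)"
    and "finite A" "finite B"
  shows "sum f A * sum f B = sum f (A \<inter> B)"
proof -
  have "sum f A * sum f B = (\<Sum>m\<in>A. \<Sum>n\<in>B. if m = n then f n else 0)"
    by (simp add: sum_product orth)
  also have "\<dots> = (\<Sum>m\<in>A. if m \<in> B then f m else 0)"
    using \<open>finite B\<close> by (simp add: sum.delta)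
  also have "\<dots> = sum f (A \<inter> B)"
    using \<open>finite A\<close> by (simp add: sum.inter_restrict)
  finally show ?thesis .
qed

text \<open>Every \<open>y\<close> in the right ideal generated by the \<open>f n\<close> satisfies \<open>y = (\<Sum>n\<in>A. f n) y\<close> for some
  finite \<open>A\<close>; there \<open>y \<mapsto> (\<Sum>n\<in>A. if P n then f n else 0) y\<close> is a well-defined homomorphism, and
  \<open>c\<close> comes from its extension.\<close>

lemma aleph0_self_injective_select_idempotents:
  fixes f :: "nat \<Rightarrow> 'r::ring_1"
  assumes H: "right_aleph0_self_injective TYPE('r)"
    and orth: "\<And>m n. f m * f n = (if m = n then f n else 0)"
  shows "\<exists>c. \<forall>n. c * f n = (if P n then f n else 0)"
proof -
  have absorb: "sum f C * y = sum f (C \<inter> A) * y"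
    if "finite A" "finite C" "sum f A * y = y" for A C y
  proof -
    have "sum f C * y = sum f C * (sum f A * y)" using that(3) by simp
    also have "\<dots> = sum f (C \<inter> A) * y"
      by (simp only: mult.assoc[symmetric] sum_orthogonal_idempotents_mult[OF orth that(2,1)])
    finally show ?thesis .
  qed
  define W where "W = {y. \<exists>A. finite A \<and> sum f A * y = y}"
  define \<phi> where "\<phi> y = sum f {n \<in> (SOME A. finite A \<and> sum f A * y = y). P n} * y" for y
  have \<phi>_eq: "\<phi> y = sum f {n \<in> A. P n} * y" if A: "finite A" "sum f A * y = y" for y A
  proof -
    define B where "B = (SOME A. finite A \<and> sum f A * y = y)"
    have B: "finite B" "sum f B * y = y"
      using someI_ex[of "\<lambda>A. finite A \<and> sum f A * y = y"] A unfolding B_def by blast+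
    have "sum f {n \<in> B. P n} * y = sum f ({n \<in> B. P n} \<inter> A) * y"
      using absorb[OF A(1) _ A(2), of "{n \<in> B. P n}"] B(1) by simp
    also have "{n \<in> B. P n} \<inter> A = {n \<in> A. P n} \<inter> B" by blast
    also have "sum f \<dots> * y = sum f {n \<in> A. P n} * y"
      using absorb[OF B(1) _ B(2), of "{n \<in> A. P n}"] A(1) by simp
    finally show ?thesis by (simp add: \<phi>_def B_def)
  qed
  have common: "\<exists>A. finite A \<and> sum f A * x = x \<and> sum f A * y = y" if xy: "x \<in> W" "y \<in> W" for x y
  proof -
    obtain A where A: "finite A" "sum f A * x = x" using xy(1) unfolding W_def by blast
    obtain B where B: "finite B" "sum f B * y = y" using xy(2) unfolding W_def by blast
    have "sum f (A \<union> B) * x = x"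
      using absorb[OF A(1) _ A(2), of "A \<union> B"] A B(1) by (simp add: Int_absorb1)
    moreover have "sum f (A \<union> B) * y = y"
      using absorb[OF B(1) _ B(2), of "A \<union> B"] B A(1) by (simp add: Int_absorb1)
    moreover have "finite (A \<union> B)" using A(1) B(1) by simp
    ultimately show ?thesis by (intro exI[of _ "A \<union> B"] conjI)
  qed
  have mult_W: "sum f A * y = y \<Longrightarrow> sum f A * (y * s) = y * s" for A y s
    by (simp add: mult.assoc[symmetric])
  have W_ideal: "right_ideal W"
    unfolding right_ideal_def
  proof (intro conjI ballI allI)
    show "0 \<in> W" by (auto simp: W_def)
    show "x + y \<in> W" if xy: "x \<in> W" "y \<in> W" for x y
    proof -
      obtain A where A: "finite A" "sum f A * x = x" "sum f A * y = y" using common[OF xy] by blast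
      then have "sum f A * (x + y) = x + y" by (simp add: distrib_left)
      then show ?thesis unfolding W_def using A(1) by blast
    qed
    show "x * s \<in> W" if "x \<in> W" for x s
      using that mult_W unfolding W_def by blast
  qed
  have W_hom: "right_hom W \<phi>"
    unfolding right_hom_def
  proof (intro conjI ballI allI)
    show "\<phi> (x + y) = \<phi> x + \<phi> y" if xy: "x \<in> W" "y \<in> W" for x y
    proof -
      obtain A where A: "finite A" "sum f A * x = x" "sum f A * y = y" using common[OF xy] by blast
      then have "sum f A * (x + y) = x + y" by (simp add: distrib_left)
      then show ?thesis using A by (simp add: \<phi>_eq distrib_left)
    qed
    show "\<phi> (x * s) = \<phi> x * s" if "x \<in> W" for x s
    proof -
      obtain A where A: "finite A" "sum f A * x = x" using \<open>x \<in> W\<close> unfolding W_def by blast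
      then show ?thesis using mult_W[OF A(2)] by (simp add: \<phi>_eq mult.assoc)
    qed
  qed
  have f_W: "range f \<subseteq> W"
    using orth unfolding W_def by (auto intro!: exI[of _ "{_}"])
  obtain c where c: "\<forall>x\<in>range f. \<phi> x = c * x"
    using aleph0_self_injective_left_mult_on_generators[OF H W_ideal W_hom countable_image f_W]
    by blast
  have "c * f n = (if P n then f n else 0)" for n
  proof -
    have "{k \<in> {n}. P k} = (if P n then {n} else {})" by auto
    then show ?thesis using c \<phi>_eq[of "{n}" "f n"] orth[of n n] by simp
  qed
  then show ?thesis by blast
qed

section \<open>Finite groups\<close>

lemma vector_space_scalar_mult:
  "vector_space (\<lambda>a x. scalar a * (x :: 'g::group_add \<Rightarrow>\<^sub>0 'a::field))"
  by unfold_locales (simp_all add: distrib_left distrib_right single_add mult.assoc[symmetric] mult_single)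

lemma group_ring_linear_projection:
  fixes I :: "('g::group_add \<Rightarrow>\<^sub>0 'a::field) set"
  assumes "right_ideal I"
  obtains P where "range P \<subseteq> I" "\<And>v. v \<in> I \<Longrightarrow> P v = v"
    "additive P" "\<And>a x. P (scalar a * x) = scalar a * P x"
proof -
  let ?s = "\<lambda>a x. scalar a * (x :: 'g \<Rightarrow>\<^sub>0 'a)"
  interpret vs: vector_space ?s by (rule vector_space_scalar_mult)
  interpret vp: vector_space_pair ?s ?s by unfold_locales
  have "scalar a * x \<in> I" if "x \<in> I" for a x
    using that assms scalar_commute[of a x] by (simp add: right_ideal_def)
  then have "vs.subspace I"
    using assms unfolding vs.subspace_def right_ideal_def by simp
  then obtain P where "P ` UNIV \<subseteq> I" "Vector_Spaces.linear ?s ?s P" "\<forall>v\<in>I. P (id v) = v"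
    using vp.linear_exists_left_inverse_on[OF vs.linear_id \<open>vs.subspace I\<close>] by auto
  then show thesis by (intro that[of P]) (auto simp: linear_iff additive_def)
qed

lemma scalar_inverse_of_nat_cancel:
  fixes y :: "'g::group_add \<Rightarrow>\<^sub>0 'a::field_char_0"
  assumes "n \<noteq> 0"
  shows "scalar (inverse (of_nat n)) * (of_nat n * y) = y"
proof -
  have "scalar (inverse (of_nat n)) * (of_nat n :: 'g \<Rightarrow>\<^sub>0 'a) = 1"
    using assms by (simp flip: single_of_nat add: mult_single)
  then show ?thesis by (simp flip: mult.assoc)
qed

lemma right_linear_group_average:
  fixes P :: "('g::group_add \<Rightarrow>\<^sub>0 'a::comm_ring_1) \<Rightarrow> ('g \<Rightarrow>\<^sub>0 'a)"
  assumes add: "additive P"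
    and scalar: "\<And>a x. P (scalar a * x) = scalar a * P x"
  shows "(\<Sum>g\<in>UNIV. P (x * r * of_group (-g)) * of_group g)
       = (\<Sum>g\<in>UNIV. P (x * of_group (-g)) * of_group g) * r"
proof -
  define Q where "Q x = (\<Sum>g\<in>UNIV. P (x * of_group (-g)) * of_group g)" for x
  have "Q (x * r) = Q x * r"
  proof (rule right_linear_from_generators)
    show "additive Q"
      by unfold_locales (simp add: Q_def distrib_right additive.add[OF add] sum.distrib)
    show "Q (x * scalar a) = Q x * scalar a" for x a
    proof -
      have "P (x * scalar a * of_group (-g)) * of_group g = P (x * of_group (-g)) * of_group g * scalar a"
        for g
      proof -
        have "x * scalar a * of_group (-g) = scalar a * (x * of_group (-g))"
          by (simp only: scalar_commute[of a x, symmetric] mult.assoc)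
        then show ?thesis
          using scalar_commute[of a "P (x * of_group (-g)) * of_group g"] by (simp add: scalar mult.assoc)
      qed
      then show ?thesis by (simp add: Q_def sum_distrib_right)
    qed
    show "Q (x * of_group h) = Q x * of_group h" for x h
    proof -
      have "(\<Sum>g\<in>UNIV. P (x * of_group h * of_group (-g)) * of_group g)
          = (\<Sum>g\<in>UNIV. P (x * of_group (-g)) * of_group g * of_group h)"
      proof (rule sum.reindex_bij_witness[of _ "\<lambda>g. g + h" "\<lambda>g. g - h"])
        fix g
        have "- (g - h) = h + - g" by (simp only: diff_conv_add_uminus minus_add minus_minus)
        moreover have "g - h + h = g" by simp
        ultimately show "P (x * of_group (- (g - h))) * of_group (g - h) * of_group h
            = P (x * of_group h * of_group (- g)) * of_group g"
          by (simp only: mult.assoc of_group_mult_of_group)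
      qed auto
      then show ?thesis by (simp add: Q_def sum_distrib_right)
    qed
  qed
  then show ?thesis by (simp add: Q_def)
qed

lemma finite_group_ring_right_ideal_left_identity:
  fixes I :: "('g::group_add \<Rightarrow>\<^sub>0 'a::field_char_0) set"
  assumes fin: "finite (UNIV :: 'g set)" and I: "right_ideal I"
  obtains e where "e \<in> I" "\<And>y. y \<in> I \<Longrightarrow> e * y = y"
proof -
  obtain P where P: "range P \<subseteq> I" "\<And>v. v \<in> I \<Longrightarrow> P v = v"
    "additive P" "\<And>a x. P (scalar a * x) = scalar a * P x"
    using group_ring_linear_projection[OF I] by blast
  define n where "n = card (UNIV :: 'g set)"
  define Q where "Q x = (\<Sum>g\<in>UNIV. P (x * of_group (-g)) * of_group g)" for x
  have Q_mult: "Q (x * r) = Q x * r" for x r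
    unfolding Q_def by (rule right_linear_group_average[OF P(3,4)])
  have Q_in: "Q x \<in> I" for x
    unfolding Q_def using P(1) I by (intro right_ideal_sum) (auto simp: right_ideal_def image_subset_iff)
  have Q_fix: "Q y = of_nat n * y" if "y \<in> I" for y
  proof -
    have "y * of_group (-g) \<in> I" for g using that I by (simp add: right_ideal_def)
    then show ?thesis by (simp add: Q_def P(2) mult.assoc of_group_mult_of_group n_def)
  qed
  define e where "e = scalar (inverse (of_nat n)) * Q 1"
  show thesis
  proof (rule that)
    show "e \<in> I"
      using Q_in[of 1] I scalar_commute[of _ "Q 1"] by (simp add: e_def right_ideal_def)
    show "e * y = y" if "y \<in> I" for y
      using Q_mult[of 1 y] Q_fix[OF that] fin scalar_inverse_of_nat_cancel[of n y]
      by (simp add: e_def mult.assoc n_def)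
  qed
qed

theorem finite_group_ring_right_self_injective:
  assumes "finite (UNIV :: 'g::group_add set)"
  shows "right_self_injective TYPE('g \<Rightarrow>\<^sub>0 'a::field_char_0)"
  unfolding right_self_injective_def
proof (intro allI impI)
  fix I :: "('g \<Rightarrow>\<^sub>0 'a) set" and \<phi>
  assume "right_ideal I \<and> right_hom I \<phi>"
  then show "\<exists>\<psi>. right_hom UNIV \<psi> \<and> (\<forall>x\<in>I. \<psi> x = \<phi> x)"
    using finite_group_ring_right_ideal_left_identity[OF assms] right_hom_extends_from_left_identity
    by metis
qed

section \<open>Invariants of finite sets of group elements\<close>

definition augmentation :: "('g::group_add \<Rightarrow>\<^sub>0 'a::comm_ring_1) \<Rightarrow> 'a" where
  "augmentation x = (\<Sum>g\<in>Poly_Mapping.keys x. Poly_Mapping.lookup x g)"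

lemma augmentation_eq_sum:
  assumes "finite F" "Poly_Mapping.keys x \<subseteq> F"
  shows "augmentation x = (\<Sum>g\<in>F. Poly_Mapping.lookup x g)"
  unfolding augmentation_def by (rule sum.mono_neutral_left) (use assms in \<open>auto simp: in_keys_iff\<close>)

lemma additive_augmentation: "additive (augmentation :: ('g::group_add \<Rightarrow>\<^sub>0 'a::comm_ring_1) \<Rightarrow> 'a)"
proof
  fix x y :: "'g \<Rightarrow>\<^sub>0 'a"
  let ?F = "Poly_Mapping.keys x \<union> Poly_Mapping.keys y"
  have "augmentation (x + y) = (\<Sum>g\<in>?F. Poly_Mapping.lookup (x + y) g)"
    by (rule augmentation_eq_sum) (auto simp: keys_add)
  also have "\<dots> = (\<Sum>g\<in>?F. Poly_Mapping.lookup x g) + (\<Sum>g\<in>?F. Poly_Mapping.lookup y g)"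
    by (simp add: lookup_add sum.distrib)
  also have "\<dots> = augmentation x + augmentation y"
    by (simp add: augmentation_eq_sum[symmetric])
  finally show "augmentation (x + y) = augmentation x + augmentation y" .
qed

lemma augmentation_single: "augmentation (Poly_Mapping.single g a) = a"
  by (simp add: augmentation_def)

lemma augmentation_mult:
  fixes x y :: "'g::group_add \<Rightarrow>\<^sub>0 'a::comm_ring_1"
  shows "augmentation (x * y) = augmentation x * augmentation y"
proof -
  have "x * y = (\<Sum>g\<in>Poly_Mapping.keys x. \<Sum>h\<in>Poly_Mapping.keys y.
      Poly_Mapping.single (g + h) (Poly_Mapping.lookup x g * Poly_Mapping.lookup y h))"
    by (subst (1) sum_single_lookup[of x, symmetric], subst (1) sum_single_lookup[of y, symmetric])
      (simp add: sum_product mult_single)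
  then have "augmentation (x * y) = (\<Sum>g\<in>Poly_Mapping.keys x. \<Sum>h\<in>Poly_Mapping.keys y.
      Poly_Mapping.lookup x g * Poly_Mapping.lookup y h)"
    by (simp add: additive.sum[OF additive_augmentation] augmentation_single)
  also have "\<dots> = augmentation x * augmentation y"
    by (simp add: augmentation_def sum_product)
  finally show ?thesis .
qed

definition add_subgroup :: "'g::group_add set \<Rightarrow> bool" where
  "add_subgroup K \<longleftrightarrow> 0 \<in> K \<and> (\<forall>x\<in>K. \<forall>y\<in>K. x + y \<in> K) \<and> (\<forall>x\<in>K. -x \<in> K)"

lemma add_subgroup_add_left_iff:
  assumes "add_subgroup K" "g \<in> K"
  shows "g + x \<in> K \<longleftrightarrow> x \<in> K"
  using assms unfolding add_subgroup_def by (metis add_minus_cancel)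

lemma add_subgroup_add_right_iff:
  assumes "add_subgroup K" "g \<in> K"
  shows "x + g \<in> K \<longleftrightarrow> x \<in> K"
  using assms unfolding add_subgroup_def by (metis add.right_neutral add.assoc add.right_inverse)

definition average :: "'g::group_add set \<Rightarrow> 'g \<Rightarrow>\<^sub>0 'a::field" where
  "average K = scalar (inverse (of_nat (card K))) * (\<Sum>g\<in>K. of_group g)"

lemma lookup_average:
  assumes "finite K"
  shows "Poly_Mapping.lookup (average K :: 'g::group_add \<Rightarrow>\<^sub>0 'a::field) k
       = (if k \<in> K then inverse (of_nat (card K)) else 0)"
  using assms by (simp add: average_def lookup_single_mult lookup_sum lookup_single when_def)

lemma of_group_mult_average:
  assumes "add_subgroup K" "finite K" "g \<in> K"
  shows "of_group g * average K = (average K :: 'g::group_add \<Rightarrow>\<^sub>0 'a::field)"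
proof (rule poly_mapping_eqI)
  fix k
  have "-g \<in> K" using assms(1,3) by (simp add: add_subgroup_def)
  then show "Poly_Mapping.lookup (of_group g * average K) k = Poly_Mapping.lookup (average K :: 'g \<Rightarrow>\<^sub>0 'a) k"
    using assms by (simp add: lookup_single_mult lookup_average add_subgroup_add_left_iff)
qed

lemma average_mult_of_group:
  assumes "add_subgroup K" "finite K" "g \<in> K"
  shows "average K * of_group g = (average K :: 'g::group_add \<Rightarrow>\<^sub>0 'a::field)"
proof (rule poly_mapping_eqI)
  fix k
  have "-g \<in> K" using assms(1,3) by (simp add: add_subgroup_def)
  then have "k - g \<in> K \<longleftrightarrow> k \<in> K"
    using add_subgroup_add_right_iff[OF assms(1)] by (metis diff_conv_add_uminus)
  then show "Poly_Mapping.lookup (average K * of_group g) k = Poly_Mapping.lookup (average K :: 'g \<Rightarrow>\<^sub>0 'a) k"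
    using assms by (simp add: lookup_mult_single lookup_average)
qed

lemma average_mult_absorb:
  assumes "finite K" "K \<noteq> {}" "\<And>g. g \<in> K \<Longrightarrow> of_group g * y = y"
  shows "average K * y = (y :: 'g::group_add \<Rightarrow>\<^sub>0 'a::field_char_0)"
proof -
  have "(\<Sum>g\<in>K. of_group g) * y = of_nat (card K) * y"
    using assms(3) by (simp add: sum_distrib_right)
  then show ?thesis
    using assms(1,2) by (simp add: average_def mult.assoc scalar_inverse_of_nat_cancel)
qed

lemma mult_average_absorb:
  assumes "finite K" "K \<noteq> {}" "\<And>g. g \<in> K \<Longrightarrow> y * of_group g = y"
  shows "y * average K = (y :: 'g::group_add \<Rightarrow>\<^sub>0 'a::field_char_0)"
proof -
  define c :: 'a where "c = inverse (of_nat (card K))"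
  have "y * average K = scalar c * (y * (\<Sum>g\<in>K. of_group g))"
    unfolding average_def c_def using scalar_commute[of _ y] by (metis mult.assoc)
  also have "y * (\<Sum>g\<in>K. of_group g) = of_nat (card K) * y"
    using assms(3) by (simp add: sum_distrib_left)
  finally show ?thesis
    using assms(1,2) by (simp add: c_def scalar_inverse_of_nat_cancel)
qed

definition invariants :: "'g::group_add set \<Rightarrow> ('g \<Rightarrow>\<^sub>0 'a::comm_ring_1) set" where
  "invariants S = {y. \<forall>s\<in>S. of_group s * y = y}"

definition stabilizer :: "('g::group_add \<Rightarrow>\<^sub>0 'a::comm_ring_1) set \<Rightarrow> 'g set" where
  "stabilizer Y = {g. \<forall>y\<in>Y. of_group g * y = y}"

lemma add_subgroup_stabilizer: "add_subgroup (stabilizer Y)"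
  unfolding add_subgroup_def stabilizer_def
proof (intro conjI ballI; clarsimp)
  show "of_group (g + h) * y = y" if "\<forall>y\<in>Y. of_group g * y = y" "\<forall>y\<in>Y. of_group h * y = y" "y \<in> Y"
    for g h y
    using that by (simp flip: of_group_mult_of_group add: mult.assoc)
  show "of_group (-g) * y = y" if "\<forall>y\<in>Y. of_group g * y = y" "y \<in> Y" for g y
  proof -
    have "of_group (-g) * y = of_group (-g) * (of_group g * y)" using that by simp
    also have "\<dots> = y" by (simp add: mult.assoc[symmetric] of_group_mult_of_group)
    finally show ?thesis .
  qed
qed

lemma finite_stabilizer:
  assumes "y \<in> Y" "y \<noteq> 0"
  shows "finite (stabilizer Y)"
proof -
  obtain k where k: "k \<in> Poly_Mapping.keys y"
    using assms(2) by (metis all_not_in_conv keys_eq_empty)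
  have "stabilizer Y \<subseteq> (\<lambda>h. h - k) ` Poly_Mapping.keys y"
  proof
    fix g assume "g \<in> stabilizer Y"
    then have "of_group g * y = y" using assms(1) by (simp add: stabilizer_def)
    then have "Poly_Mapping.lookup y (g + k) = Poly_Mapping.lookup y k"
      by (metis lookup_single_mult add.assoc add.left_inverse add_0 mult_1)
    then have "g + k \<in> Poly_Mapping.keys y" using k by (simp add: in_keys_iff)
    then show "g \<in> (\<lambda>h. h - k) ` Poly_Mapping.keys y" by (rule rev_image_eqI) simp
  qed
  then show ?thesis by (rule finite_subset) simp
qed

lemma subset_stabilizer_invariants:
  fixes S :: "'g::group_add set"
  shows "S \<subseteq> stabilizer (invariants S :: ('g \<Rightarrow>\<^sub>0 'a::comm_ring_1) set)"
  by (auto simp: stabilizer_def invariants_def)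

lemma invariants_principal: "\<exists>e. invariants S = range ((*) (e :: 'g::group_add \<Rightarrow>\<^sub>0 'a::field_char_0))"
proof (cases "invariants S = ({0} :: ('g \<Rightarrow>\<^sub>0 'a) set)")
  case True
  then show ?thesis by (intro exI[of _ 0]) auto
next
  case False
  then obtain y where "y \<in> invariants S" "y \<noteq> (0 :: 'g \<Rightarrow>\<^sub>0 'a)"
    by (auto simp: invariants_def)
  define K where "K = stabilizer (invariants S :: ('g \<Rightarrow>\<^sub>0 'a) set)"
  have "finite K"
    unfolding K_def by (rule finite_stabilizer[OF \<open>y \<in> invariants S\<close> \<open>y \<noteq> 0\<close>])
  moreover have "add_subgroup K"
    unfolding K_def by (rule add_subgroup_stabilizer)
  moreover have "S \<subseteq> K"
    unfolding K_def by (rule subset_stabilizer_invariants)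
  ultimately have K: "finite K" "add_subgroup K" "S \<subseteq> K" by blast+
  have "K \<noteq> {}" using K(2) by (auto simp: add_subgroup_def)
  have "invariants S = range ((*) (average K :: 'g \<Rightarrow>\<^sub>0 'a))"
  proof (intro set_eqI iffI)
    fix z :: "'g \<Rightarrow>\<^sub>0 'a" assume "z \<in> invariants S"
    then have "average K * z = z"
      by (intro average_mult_absorb[OF K(1) \<open>K \<noteq> {}\<close>]) (simp add: K_def stabilizer_def)
    then show "z \<in> range ((*) (average K))" by (metis rangeI)
  next
    fix z :: "'g \<Rightarrow>\<^sub>0 'a" assume "z \<in> range ((*) (average K))"
    then obtain x where z: "z = average K * x" by auto
    have "of_group s * z = z" if "s \<in> S" for s
    proof -
      have "s \<in> K" using that K(3) by blast
      then have "of_group s * average K = (average K :: 'g \<Rightarrow>\<^sub>0 'a)"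
        by (rule of_group_mult_average[OF K(2,1)])
      then show ?thesis by (simp add: z mult.assoc[symmetric])
    qed
    then show "z \<in> invariants S" by (simp add: invariants_def)
  qed
  then show ?thesis by blast
qed

text \<open>Such \<open>b\<close> lies in the left ideal generated by the \<open>1 - s\<close>, \<open>s \<in> S\<close>.\<close>

lemma aleph0_self_injective_ann_invariants_augmentation:
  fixes S :: "'g::group_add set"
  assumes H: "right_aleph0_self_injective TYPE('g \<Rightarrow>\<^sub>0 'a::field_char_0)"
    and "finite S" and "\<And>y. y \<in> invariants S \<Longrightarrow> b * y = 0"
  shows "augmentation (b :: 'g \<Rightarrow>\<^sub>0 'a) = 0"
  using assms(2,3)
proof (induction S arbitrary: b rule: finite_induct)
  case empty
  have "b * 1 = 0" using empty[of 1] by (simp add: invariants_def)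
  then show ?case by (simp add: augmentation_def)
next
  case (insert s S)
  obtain e :: "'g \<Rightarrow>\<^sub>0 'a" where e: "invariants S = range ((*) e)"
    using invariants_principal by blast
  define a :: "'g \<Rightarrow>\<^sub>0 'a" where "a = 1 - of_group s"
  have "b * y = 0" if "y \<in> range ((*) e)" "a * y = 0" for y
  proof -
    have "of_group s * y = y" using that(2) by (simp add: a_def left_diff_distrib)
    moreover have "y \<in> invariants S" using that(1) e by simp
    ultimately have "y \<in> invariants (insert s S)" by (simp add: invariants_def)
    then show ?thesis by (rule insert.prems)
  qed
  then obtain c where c: "\<forall>y\<in>range ((*) e). c * a * y = b * y"
    using aleph0_self_injective_ann_imp_left_factor[OF H] by blast
  have "augmentation (b - c * a) = 0"
    by (rule insert.IH) (use c e in \<open>auto simp: left_diff_distrib\<close>)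
  moreover have "augmentation a = 0"
    by (simp add: a_def additive.diff[OF additive_augmentation] augmentation_single flip: single_one)
  ultimately show ?case by (simp add: additive.diff[OF additive_augmentation] augmentation_mult)
qed

lemma aleph0_self_injective_invariants_nonzero:
  assumes "right_aleph0_self_injective TYPE('g::group_add \<Rightarrow>\<^sub>0 'a::field_char_0)" "finite S"
  shows "invariants S \<noteq> ({0} :: ('g \<Rightarrow>\<^sub>0 'a) set)"
proof
  assume "invariants S = ({0} :: ('g \<Rightarrow>\<^sub>0 'a) set)"
  then have "augmentation (1 :: 'g \<Rightarrow>\<^sub>0 'a) = 0"
    using aleph0_self_injective_ann_invariants_augmentation[OF assms] by simp
  then show False by (simp add: augmentation_def)
qed

section \<open>Infinite groups\<close>

lemma infinite_locally_finite_strict_chain: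
  assumes inf: "infinite (UNIV :: 'g set)"
    and loc: "\<And>S :: 'g set. finite S \<Longrightarrow> \<exists>K. finite K \<and> add_subgroup K \<and> S \<subseteq> K"
  obtains K :: "nat \<Rightarrow> 'g::group_add set"
  where "\<And>n. finite (K n)" "\<And>n. add_subgroup (K n)" "\<And>n. K n \<subset> K (Suc n)"
proof -
  have base: "\<exists>K :: 'g set. finite K \<and> add_subgroup K"
    using loc[of "{}"] by simp
  have step: "\<exists>K'. (finite K' \<and> add_subgroup K') \<and> K \<subset> K'" if K: "finite K \<and> add_subgroup K"
    for K :: "'g set"
  proof -
    obtain x where x: "x \<notin> K" using ex_new_if_finite[OF inf] K by blast
    obtain K' where "finite K'" "add_subgroup K'" "insert x K \<subseteq> K'"
      using loc[of "insert x K"] K by blast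
    with x show ?thesis by (intro exI[of _ K']) auto
  qed
  have "\<exists>K :: nat \<Rightarrow> 'g set. \<forall>n. (finite (K n) \<and> add_subgroup (K n)) \<and> K n \<subset> K (Suc n)"
    by (rule dependent_nat_choice[of "\<lambda>_ K. finite K \<and> add_subgroup K" "\<lambda>_ K K'. K \<subset> K'", OF base step])
  then obtain K :: "nat \<Rightarrow> 'g set"
    where "\<forall>n. (finite (K n) \<and> add_subgroup (K n)) \<and> K n \<subset> K (Suc n)" ..
  then show thesis by (intro that[of K]) auto
qed

lemma lookup_mult_zero:
  fixes c x :: "'g::group_add \<Rightarrow>\<^sub>0 'a::comm_ring_1"
  shows "Poly_Mapping.lookup (c * x) 0
       = (\<Sum>g\<in>Poly_Mapping.keys c. Poly_Mapping.lookup c g * Poly_Mapping.lookup x (-g))"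
proof -
  have "c * x = (\<Sum>g\<in>Poly_Mapping.keys c. Poly_Mapping.single g (Poly_Mapping.lookup c g) * x)"
    by (subst (1) sum_single_lookup[of c, symmetric]) (simp add: sum_distrib_right)
  then show ?thesis by (simp add: lookup_sum lookup_single_mult)
qed

lemma average_mult_average_chain:
  fixes K :: "nat \<Rightarrow> 'g::group_add set"
  assumes fin: "\<And>n. finite (K n)" and sg: "\<And>n. add_subgroup (K n)" and mono: "mono K"
  shows "average (K m) * average (K n) = (average (K (max m n)) :: 'g \<Rightarrow>\<^sub>0 'a::field_char_0)"
proof (cases "m \<le> n")
  case True
  have "K m \<noteq> {}" using sg[of m] by (auto simp: add_subgroup_def)
  moreover have "of_group g * average (K n) = (average (K n) :: 'g \<Rightarrow>\<^sub>0 'a)" if "g \<in> K m" for g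
  proof -
    have "g \<in> K n" using that monoD[OF mono True] by blast
    then show ?thesis by (rule of_group_mult_average[OF sg fin])
  qed
  ultimately show ?thesis using True fin by (simp add: average_mult_absorb max_def)
next
  case False
  have "K n \<noteq> {}" using sg[of n] by (auto simp: add_subgroup_def)
  moreover have "average (K m) * of_group g = (average (K m) :: 'g \<Rightarrow>\<^sub>0 'a)" if "g \<in> K n" for g
  proof -
    have "n \<le> m" using False by simp
    then have "g \<in> K m" using that monoD[OF mono, of n m] by blast
    then show ?thesis by (rule average_mult_of_group[OF sg fin])
  qed
  ultimately show ?thesis using False fin by (simp add: mult_average_absorb max_def)
qed

lemma decreasing_idempotents_diff_orthogonal:
  fixes e :: "nat \<Rightarrow> 'r::ring_1"
  assumes "\<And>m n. e m * e n = e (max m n)"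
  shows "(e m - e (Suc m)) * (e n - e (Suc n)) = (if m = n then e n - e (Suc n) else 0)"
  by (cases m n rule: linorder_cases) (auto simp: algebra_simps assms max_def dest: Suc_leI)

text \<open>The finite support of \<open>c\<close> meets the union of the chain inside a single \<open>K N\<close>.\<close>

lemma trace_mult_average_diff_eventually_proportional:
  fixes c :: "'g::group_add \<Rightarrow>\<^sub>0 'a::field"
  assumes fin: "\<And>n. finite (K n)" and sg: "\<And>n. add_subgroup (K n)" and mono: "mono K"
  defines "f n \<equiv> average (K n) - average (K (Suc n)) :: 'g \<Rightarrow>\<^sub>0 'a"
  obtains C N where "\<And>n. N \<le> n \<Longrightarrow> Poly_Mapping.lookup (c * f n) 0 = C * Poly_Mapping.lookup (f n) 0"
proof -
  define U where "U = \<Union>(range K)"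
  have "K m \<subseteq> K n \<or> K n \<subseteq> K m" for m n
    using nat_le_linear[of m n] monoD[OF mono] by blast
  then have chain: "subset.chain UNIV (range K)"
    by (auto simp: subset.chain_def)
  have "finite (Poly_Mapping.keys c \<inter> U)" "Poly_Mapping.keys c \<inter> U \<subseteq> \<Union>(range K)" "range K \<noteq> {}"
    by (auto simp: U_def)
  then obtain B where "B \<in> range K" "Poly_Mapping.keys c \<inter> U \<subseteq> B"
    by (rule finite_subset_Union_chain[OF _ _ _ chain])
  then obtain N where N: "Poly_Mapping.keys c \<inter> U \<subseteq> K N" by blast
  have lookup_f: "Poly_Mapping.lookup (f n) (-g) = (if g \<in> U then Poly_Mapping.lookup (f n) 0 else 0)"
    if "g \<in> Poly_Mapping.keys c" "N \<le> n" for g n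
  proof (cases "g \<in> U")
    case True
    then have "g \<in> K n" using N that monoD[OF mono, of N n] by blast
    then have "-g \<in> K n" "-g \<in> K (Suc n)" "0 \<in> K n" "0 \<in> K (Suc n)"
      using sg monoD[OF mono, of n "Suc n"] by (auto simp: add_subgroup_def)
    then show ?thesis using True by (simp add: f_def lookup_minus lookup_average fin)
  next
    case False
    have "-g \<notin> K m" for m
    proof
      assume "-g \<in> K m"
      then have "g \<in> K m" using sg[of m] by (metis add_subgroup_def minus_minus)
      then show False using False by (auto simp: U_def)
    qed
    then show ?thesis using False by (simp add: f_def lookup_minus lookup_average fin)
  qed
  define C where "C = (\<Sum>g\<in>Poly_Mapping.keys c \<inter> U. Poly_Mapping.lookup c g)"
  have "Poly_Mapping.lookup (c * f n) 0 = C * Poly_Mapping.lookup (f n) 0" if "N \<le> n" for n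
  proof -
    have "Poly_Mapping.lookup (c * f n) 0
        = (\<Sum>g\<in>Poly_Mapping.keys c. (if g \<in> U then Poly_Mapping.lookup c g else 0) * Poly_Mapping.lookup (f n) 0)"
      unfolding lookup_mult_zero using lookup_f[OF _ that] by (intro sum.cong) auto
    also have "\<dots> = C * Poly_Mapping.lookup (f n) 0"
      by (simp add: C_def sum_distrib_right sum.inter_restrict)
    finally show ?thesis .
  qed
  then show thesis by (rule that)
qed

lemma aleph0_self_injective_no_strict_chain_of_finite_subgroups:
  fixes K :: "nat \<Rightarrow> 'g::group_add set"
  assumes H: "right_aleph0_self_injective TYPE('g \<Rightarrow>\<^sub>0 'a::field_char_0)"
    and fin: "\<And>n. finite (K n)" and sg: "\<And>n. add_subgroup (K n)" and strict: "\<And>n. K n \<subset> K (Suc n)"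
  shows False
proof -
  define f :: "nat \<Rightarrow> 'g \<Rightarrow>\<^sub>0 'a" where "f n = average (K n) - average (K (Suc n))" for n
  have mono: "mono K" using strict by (simp add: mono_iff_le_Suc less_imp_le)
  have "f m * f n = (if m = n then f n else 0)" for m n
    unfolding f_def
    by (rule decreasing_idempotents_diff_orthogonal) (rule average_mult_average_chain[OF fin sg mono])
  then obtain c where c: "\<And>n. c * f n = (if even n then f n else 0)"
    using aleph0_self_injective_select_idempotents[OF H, of f even] by blast
  obtain C N where CN: "\<And>n. N \<le> n \<Longrightarrow> Poly_Mapping.lookup (c * f n) 0 = C * Poly_Mapping.lookup (f n) 0"
    using trace_mult_average_diff_eventually_proportional[OF fin sg mono, of c] unfolding f_def by blast
  have "Poly_Mapping.lookup (f n) 0 \<noteq> 0" for n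
  proof -
    have "card (K n) < card (K (Suc n))" by (rule psubset_card_mono[OF fin strict])
    moreover have "0 \<in> K n" "0 \<in> K (Suc n)" using sg by (auto simp: add_subgroup_def)
    ultimately show ?thesis by (simp add: f_def lookup_minus lookup_average fin)
  qed
  then have "C = 1" "C = 0"
    using CN[of "2 * N"] c[of "2 * N"] CN[of "Suc (2 * N)"] c[of "Suc (2 * N)"] by simp_all
  then show False by simp
qed

theorem aleph0_self_injective_group_ring_finite:
  assumes H: "right_aleph0_self_injective TYPE('g::group_add \<Rightarrow>\<^sub>0 'a::field_char_0)"
  shows "finite (UNIV :: 'g set)"
proof (rule ccontr)
  assume inf: "infinite (UNIV :: 'g set)"
  have loc: "\<exists>K. finite K \<and> add_subgroup K \<and> S \<subseteq> K" if S: "finite S" for S :: "'g set"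
  proof -
    define Y where "Y = (invariants S :: ('g \<Rightarrow>\<^sub>0 'a) set)"
    have "0 \<in> Y" by (simp add: Y_def invariants_def)
    then obtain y where "y \<in> Y" "y \<noteq> 0"
      using aleph0_self_injective_invariants_nonzero[OF H S] unfolding Y_def by blast
    moreover have "S \<subseteq> stabilizer Y"
      unfolding Y_def by (rule subset_stabilizer_invariants)
    ultimately show ?thesis
      using finite_stabilizer add_subgroup_stabilizer by blast
  qed
  show False
  proof (rule infinite_locally_finite_strict_chain[OF inf loc])
    fix K :: "nat \<Rightarrow> 'g set"
    assume "\<And>n. finite (K n)" "\<And>n. add_subgroup (K n)" "\<And>n. K n \<subset> K (Suc n)"
    then show False by (rule aleph0_self_injective_no_strict_chain_of_finite_subgroups[OF H])
  qed
qed

theorem mainTheorem18: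
  shows "(right_aleph0_self_injective TYPE('g::group_add \<Rightarrow>\<^sub>0 'a::field_char_0)
            \<longleftrightarrow> finite (UNIV :: 'g set))
       \<and> (finite (UNIV :: 'g set)
            \<longleftrightarrow> right_self_injective TYPE('g \<Rightarrow>\<^sub>0 'a))"
  using aleph0_self_injective_group_ring_finite[where 'g = 'g and 'a = 'a]
    finite_group_ring_right_self_injective[where 'g = 'g and 'a = 'a]
    right_self_injective_imp_aleph0[where 'r = "'g \<Rightarrow>\<^sub>0 'a"]
  by blast

end
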